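(* Let $\{\triangleright, ;\}\subseteq\sigma\subseteq\{\triangleright, ;, \wedge, \mathrm{upd}, \sqcup, \mathsf{D}, \mathsf{A}\}$ and let $\mathcal{A}$ be a $\sigma$-algebra that is representable by partial functions and whose atoms are separating. Write $\mathrm{At}(\mathcal{A})$ for its set of atoms, and define $a\sim b$ iff $a\lhd b = b$ and $b\lhd a = a$ (an equivalence relation). If $\mathsf{D},\mathsf{A}\notin\sigma$, for each $a\in\mathcal{A}$ let $\theta(a)$ be the partial function on the disjoint union $\mathrm{At}(\mathcal{A}) \amalg (\mathrm{At}(\mathcal{A})/{\sim})$ given, for $x\in\mathrm{At}(\mathcal{A})$, by $\theta(a)(x) = x;a$ if $x;a\neq 0$ (undefined otherwise) and $\theta(a)(x/{\sim}) = x\lhd a$ if $x\lhd a\ne 0$ (undefined otherwise). If $\mathsf{D}\in\sigma$ or $\mathsf{A}\in\sigma$, let instead $\theta(a)$ be the partial function on $\mathrm{At}(\mathcal{A})$ given by $\theta(a)(x)=x;a$ if $x;a\ne0$ and undefined otherwise. Then $\theta$ is well defined (its values are atoms, and the second component does not depend on the choice of representative of $x/{\sim}$) and is a representation of $\mathcal{A}$ by partial functions. Moreover: (1) if composition in $\mathcal{A}$ is completely left-distributive over joins, then $\theta$ is join complete; (2) if composition in $\mathcal{A}$ is completely left-distributive over meets, then $\theta$ is meet complete.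
   Context: The operations are interpreted on partial functions on a base set $X$ as: $f \triangleright g = \{(x,y) \in g : x \notin \mathrm{dom}(f)\}$; $f;g=\{(x,z):\exists y\,((x,y)\in f,(y,z)\in g)\}$; $f\wedge g = f\cap g$; $\mathrm{upd}(f,g)(x)$ is $f(x)$ if $f(x)$ defined and $g(x)$ undefined, $g(x)$ if both defined, undefined otherwise; $(f\sqcup g)(x)$ is $f(x)$ if defined, else $g(x)$; $\mathsf{D}(f)$ = identity on $\mathrm{dom}(f)$; $\mathsf{A}(f)$ = identity on $X\setminus\mathrm{dom}(f)$. A representation by partial functions is an isomorphism onto a $\sigma$-algebra of partial functions with these operations. Define $0 := a\triangleright a$, $a\lhd b := (a\triangleright b)\triangleright b$, $a \le b :\iff a\lhd b = a$; for representable algebras this is a partial order with least element $0$. An atom is a minimal nonzero element; atoms are separating if whenever $a\not\le b$ there is an atom $c\le a$ with $c\not\le b$. Composition is completely left-distributive over joins if for all $S$ with $\bigvee S$ existing and all $a$, $\bigvee\{a;s:s\in S\}$ exists and equals $a;\bigvee S$; over meets, the same with nonempty $S$ and meets. $\theta$ is join complete if $\theta(\bigvee S)=\bigcup\theta[S]$ whenever $\bigvee S$ exists; meet complete if $\theta(\bigwedge S)=\bigcap\theta[S]$ whenever $S\ne\emptyset$ and $\bigwedge S$ exists. *)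

theory Defs
  imports Main
begin

text \<open>Operation symbols: Ovr = override (triangleright), Comp = composition (;),
  Meet = intersection, Upd = update, PJoin = preferential union, Dom = D, ADom = A.\<close>
datatype opsym = Ovr | Comp | Meet | Upd | PJoin | Dom | ADom

text \<open>An algebra with carrier the type 'a carrying all seven operations; a sigma-algebra
  only uses the operations whose symbols lie in sigma (the others are ignored).\<close>
record 'a alg =
  ovr :: "'a \<Rightarrow> 'a \<Rightarrow> 'a"
  cmp :: "'a \<Rightarrow> 'a \<Rightarrow> 'a"
  mt :: "'a \<Rightarrow> 'a \<Rightarrow> 'a"
  upd :: "'a \<Rightarrow> 'a \<Rightarrow> 'a"
  pjn :: "'a \<Rightarrow> 'a \<Rightarrow> 'a"
  dm :: "'a \<Rightarrow> 'a"
  adm :: "'a \<Rightarrow> 'a"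

definition pf_ovr :: "('b \<rightharpoonup> 'b) \<Rightarrow> ('b \<rightharpoonup> 'b) \<Rightarrow> ('b \<rightharpoonup> 'b)" where
  "pf_ovr f g = (\<lambda>x. if f x = None then g x else None)"

definition pf_comp :: "('b \<rightharpoonup> 'b) \<Rightarrow> ('b \<rightharpoonup> 'b) \<Rightarrow> ('b \<rightharpoonup> 'b)" where
  "pf_comp f g = (\<lambda>x. case f x of None \<Rightarrow> None | Some y \<Rightarrow> g y)"

definition pf_meet :: "('b \<rightharpoonup> 'b) \<Rightarrow> ('b \<rightharpoonup> 'b) \<Rightarrow> ('b \<rightharpoonup> 'b)" where
  "pf_meet f g = (\<lambda>x. if f x = g x then f x else None)"

definition pf_upd :: "('b \<rightharpoonup> 'b) \<Rightarrow> ('b \<rightharpoonup> 'b) \<Rightarrow> ('b \<rightharpoonup> 'b)" where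
  "pf_upd f g = (\<lambda>x. case f x of None \<Rightarrow> None
                                | Some y \<Rightarrow> (case g x of None \<Rightarrow> Some y | Some z \<Rightarrow> Some z))"

definition pf_join :: "('b \<rightharpoonup> 'b) \<Rightarrow> ('b \<rightharpoonup> 'b) \<Rightarrow> ('b \<rightharpoonup> 'b)" where
  "pf_join f g = (\<lambda>x. case f x of Some y \<Rightarrow> Some y | None \<Rightarrow> g x)"

definition pf_D :: "('b \<rightharpoonup> 'b) \<Rightarrow> ('b \<rightharpoonup> 'b)" where
  "pf_D f = (\<lambda>x. if f x \<noteq> None then Some x else None)"

definition pf_A :: "'b set \<Rightarrow> ('b \<rightharpoonup> 'b) \<Rightarrow> ('b \<rightharpoonup> 'b)" where
  "pf_A X f = (\<lambda>x. if x \<in> X \<and> f x = None then Some x else None)"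

definition pfun_on :: "'b set \<Rightarrow> ('b \<rightharpoonup> 'b) \<Rightarrow> bool" where
  "pfun_on X f \<longleftrightarrow> dom f \<subseteq> X \<and> ran f \<subseteq> X"

definition pgraph :: "('b \<rightharpoonup> 'b) \<Rightarrow> ('b \<times> 'b) set" where
  "pgraph f = {(x, y). f x = Some y}"

definition is_rep :: "opsym set \<Rightarrow> 'a alg \<Rightarrow> 'b set \<Rightarrow> ('a \<Rightarrow> ('b \<rightharpoonup> 'b)) \<Rightarrow> bool" where
  "is_rep \<sigma> A X \<theta> \<longleftrightarrow>
     inj \<theta> \<and> (\<forall>a. pfun_on X (\<theta> a)) \<and>
     (Ovr \<in> \<sigma> \<longrightarrow> (\<forall>a b. \<theta> (ovr A a b) = pf_ovr (\<theta> a) (\<theta> b))) \<and>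
     (Comp \<in> \<sigma> \<longrightarrow> (\<forall>a b. \<theta> (cmp A a b) = pf_comp (\<theta> a) (\<theta> b))) \<and>
     (Meet \<in> \<sigma> \<longrightarrow> (\<forall>a b. \<theta> (mt A a b) = pf_meet (\<theta> a) (\<theta> b))) \<and>
     (Upd \<in> \<sigma> \<longrightarrow> (\<forall>a b. \<theta> (upd A a b) = pf_upd (\<theta> a) (\<theta> b))) \<and>
     (PJoin \<in> \<sigma> \<longrightarrow> (\<forall>a b. \<theta> (pjn A a b) = pf_join (\<theta> a) (\<theta> b))) \<and>
     (Dom \<in> \<sigma> \<longrightarrow> (\<forall>a. \<theta> (dm A a) = pf_D (\<theta> a))) \<and>
     (ADom \<in> \<sigma> \<longrightarrow> (\<forall>a. \<theta> (adm A a) = pf_A X (\<theta> a)))"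

text \<open>0 := a \<triangleright> a (independent of a in representable algebras).\<close>
definition zr :: "'a alg \<Rightarrow> 'a" where
  "zr A = (THE z. \<forall>a. ovr A a a = z)"

definition restr :: "'a alg \<Rightarrow> 'a \<Rightarrow> 'a \<Rightarrow> 'a" where
  "restr A a b = ovr A (ovr A a b) b"

definition leq :: "'a alg \<Rightarrow> 'a \<Rightarrow> 'a \<Rightarrow> bool" where
  "leq A a b \<longleftrightarrow> restr A a b = a"

definition is_atom :: "'a alg \<Rightarrow> 'a \<Rightarrow> bool" where
  "is_atom A c \<longleftrightarrow> c \<noteq> zr A \<and> (\<forall>d. leq A d c \<and> d \<noteq> zr A \<longrightarrow> d = c)"

definition atoms :: "'a alg \<Rightarrow> 'a set" where
  "atoms A = {c. is_atom A c}"

definition separating :: "'a alg \<Rightarrow> bool" where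
  "separating A \<longleftrightarrow>
     (\<forall>a b. \<not> leq A a b \<longrightarrow> (\<exists>c. is_atom A c \<and> leq A c a \<and> \<not> leq A c b))"

definition sim :: "'a alg \<Rightarrow> 'a \<Rightarrow> 'a \<Rightarrow> bool" where
  "sim A a b \<longleftrightarrow> restr A a b = b \<and> restr A b a = a"

definition sim_rel :: "'a alg \<Rightarrow> ('a \<times> 'a) set" where
  "sim_rel A = {(a, b). a \<in> atoms A \<and> b \<in> atoms A \<and> sim A a b}"

definition is_lub :: "'a alg \<Rightarrow> 'a set \<Rightarrow> 'a \<Rightarrow> bool" where
  "is_lub A S j \<longleftrightarrow> (\<forall>s\<in>S. leq A s j) \<and> (\<forall>u. (\<forall>s\<in>S. leq A s u) \<longrightarrow> leq A j u)"

definition is_glb :: "'a alg \<Rightarrow> 'a set \<Rightarrow> 'a \<Rightarrow> bool" where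
  "is_glb A S m \<longleftrightarrow> (\<forall>s\<in>S. leq A m s) \<and> (\<forall>l. (\<forall>s\<in>S. leq A l s) \<longrightarrow> leq A l m)"

definition cld_joins :: "'a alg \<Rightarrow> bool" where
  "cld_joins A \<longleftrightarrow>
     (\<forall>S j a. is_lub A S j \<longrightarrow> is_lub A ((\<lambda>s. cmp A a s) ` S) (cmp A a j))"

definition cld_meets :: "'a alg \<Rightarrow> bool" where
  "cld_meets A \<longleftrightarrow>
     (\<forall>S m a. S \<noteq> {} \<and> is_glb A S m \<longrightarrow> is_glb A ((\<lambda>s. cmp A a s) ` S) (cmp A a m))"

definition join_complete :: "'a alg \<Rightarrow> ('a \<Rightarrow> ('b \<rightharpoonup> 'b)) \<Rightarrow> bool" where
  "join_complete A \<theta> \<longleftrightarrow>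
     (\<forall>S j. is_lub A S j \<longrightarrow> pgraph (\<theta> j) = (\<Union>s\<in>S. pgraph (\<theta> s)))"

definition meet_complete :: "'a alg \<Rightarrow> ('a \<Rightarrow> ('b \<rightharpoonup> 'b)) \<Rightarrow> bool" where
  "meet_complete A \<theta> \<longleftrightarrow>
     (\<forall>S m. S \<noteq> {} \<and> is_glb A S m \<longrightarrow> pgraph (\<theta> m) = (\<Inter>s\<in>S. pgraph (\<theta> s)))"

definition base1 :: "'a alg \<Rightarrow> ('a + 'a set) set" where
  "base1 A = Inl ` atoms A \<union> Inr ` (atoms A // sim_rel A)"

definition theta1 :: "'a alg \<Rightarrow> 'a \<Rightarrow> (('a + 'a set) \<rightharpoonup> ('a + 'a set))" where
  "theta1 A a = (\<lambda>p. case p of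
      Inl x \<Rightarrow> (if x \<in> atoms A \<and> cmp A x a \<noteq> zr A then Some (Inl (cmp A x a)) else None)
    | Inr c \<Rightarrow> (if c \<in> atoms A // sim_rel A \<and> restr A (SOME x. x \<in> c) a \<noteq> zr A
               then Some (Inl (restr A (SOME x. x \<in> c) a)) else None))"

definition theta2 :: "'a alg \<Rightarrow> 'a \<Rightarrow> ('a \<rightharpoonup> 'a)" where
  "theta2 A a = (\<lambda>x. if x \<in> atoms A \<and> cmp A x a \<noteq> zr A then Some (cmp A x a) else None)"

end

theory Submission
  imports Defs
begin

text \<open>
  Fix a representation \<open>T\<close> preserving \<open>\<triangleright>\<close> and \<open>;\<close>. For an atom \<open>x\<close>, the maps
  \<open>a \<mapsto> x ; a\<close> and \<open>a \<mapsto> x \<lhd> a\<close> are precompositions of \<open>T a\<close> with a partial function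
  \<open>g\<close> (namely \<open>T x\<close>, resp. the identity on \<open>dom (T x)\<close>) whose domain is that of an atom.
  Such a domain cannot be split: the value is either \<open>0\<close> or has all of \<open>dom g\<close> as domain, and
  then it is an atom. Consequently each operation acts on these ``probes'' by a case distinction
  on which arguments vanish, exactly as it acts on the value of partial functions at one point,
  so collecting the nonzero probe values at all atoms (and all \<open>\<sim>\<close>-classes) is a homomorphism.
  It is injective because the probe \<open>x \<lhd> _\<close> returns \<open>x\<close> precisely on the elements above \<open>x\<close>
  and atoms are separating; with \<open>D\<close> or \<open>A\<close> available this probe is \<open>D(x) ; _\<close>.
  A nonzero probe value is an atom, so it is the same for all elements above; this gives
  completeness, for which left-distributivity is needed only at the composition probes.
\<close>

section \<open>Atoms of a represented algebra\<close>

lemma pf_A_pf_A: "dom f \<subseteq> X \<Longrightarrow> pf_A X (pf_A X f) = pf_D f"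
  by (auto simp: fun_eq_iff pf_A_def pf_D_def)

locale ovr_comp_rep =
  fixes A :: "'a alg" and X :: "'b set" and T :: "'a \<Rightarrow> ('b \<rightharpoonup> 'b)"
  assumes inj_T: "inj T" and pfun_on_T: "\<And>a. pfun_on X (T a)"
    and T_ovr: "\<And>a b. T (ovr A a b) = pf_ovr (T a) (T b)"
    and T_cmp: "\<And>a b. T (cmp A a b) = pf_comp (T a) (T b)"
begin

lemma T_eqD: "T a = T b \<Longrightarrow> a = b"
  using inj_T by (simp add: inj_eq)

lemma T_zr: "T (zr A) = Map.empty"
proof -
  have ovr_self: "T (ovr A a a) = Map.empty" for a
    by (simp add: T_ovr pf_ovr_def fun_eq_iff)
  have "zr A = ovr A a a" for a
    unfolding zr_def by (rule the_equality) (auto intro: T_eqD simp: ovr_self)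
  then show ?thesis using ovr_self by simp
qed

lemma zr_iff: "a = zr A \<longleftrightarrow> T a = Map.empty"
  using T_zr T_eqD by metis

lemma T_restr: "T (restr A a b) y = (if T a y = None then None else T b y)"
  by (simp add: restr_def T_ovr pf_ovr_def)

lemma restr_eq_iff: "restr A a b = c \<longleftrightarrow> (\<forall>y. (if T a y = None then None else T b y) = T c y)"
  using T_eqD by (auto simp: T_restr[symmetric])

lemma leq_iff: "leq A a b \<longleftrightarrow> T a \<subseteq>\<^sub>m T b"
  unfolding leq_def restr_eq_iff map_le_def by (auto simp: dom_def)

lemma leq_refl: "leq A a a"
  by (simp add: leq_iff)

lemma leq_trans: "leq A a b \<Longrightarrow> leq A b c \<Longrightarrow> leq A a c"
  by (auto simp: leq_iff intro: map_le_trans)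

lemma leq_antisym: "leq A a b \<Longrightarrow> leq A b a \<Longrightarrow> a = b"
  by (simp add: leq_iff map_le_antisym T_eqD)

lemma restr_eq_right_iff: "restr A a b = b \<longleftrightarrow> dom (T b) \<subseteq> dom (T a)"
  unfolding restr_eq_iff subset_iff domIff by (metis (full_types))

lemma sim_iff: "sim A a b \<longleftrightarrow> dom (T a) = dom (T b)"
  unfolding sim_def restr_eq_right_iff by auto

lemma restr_cong_dom:
  assumes "dom (T x) = dom (T y)" shows "restr A x a = restr A y a"
proof -
  have "T x z = None \<longleftrightarrow> T y z = None" for z using assms by (metis domIff)
  then show ?thesis by (intro T_eqD ext) (simp add: T_restr)
qed

lemma equiv_sim_rel: "equiv (atoms A) (sim_rel A)"
  unfolding equiv_def refl_on_def sym_def trans_def sim_rel_def sim_iff by auto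

lemma restr_sim_rel: "(x, y) \<in> sim_rel A \<Longrightarrow> restr A x a = restr A y a"
  unfolding sim_rel_def sim_iff by (blast intro: restr_cong_dom)

lemma class_rep_atom:
  assumes "c \<in> atoms A // sim_rel A" shows "is_atom A (SOME x. x \<in> c)"
proof -
  have "(SOME x. x \<in> c) \<in> c"
    using in_quotient_imp_non_empty[OF equiv_sim_rel assms] by (simp add: some_in_eq)
  then show ?thesis
    using in_quotient_imp_subset[OF equiv_sim_rel assms] by (auto simp: atoms_def)
qed

lemma atom_nonempty: "is_atom A x \<Longrightarrow> dom (T x) \<noteq> {}"
  unfolding is_atom_def zr_iff by simp

lemma atom_dom_subset:
  assumes x: "is_atom A x" and meet: "dom (T x) \<inter> dom (T a) \<noteq> {}"
  shows "dom (T x) \<subseteq> dom (T a)"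
proof -
  have "leq A (restr A a x) x" and "restr A a x \<noteq> zr A"
    using meet by (auto simp: leq_iff map_le_def T_restr zr_iff fun_eq_iff)
  then have "restr A a x = x" using x by (simp add: is_atom_def)
  then show ?thesis by (simp add: restr_eq_right_iff)
qed

lemma atom_if_dom_eq:
  assumes x: "is_atom A x" and dom_eq: "dom (T e) = dom (T x)"
  shows "is_atom A e"
  unfolding is_atom_def
proof (intro conjI allI impI)
  show "e \<noteq> zr A" using atom_nonempty[OF x] dom_eq by (metis dom_eq_empty_conv zr_iff)
  fix d assume "leq A d e \<and> d \<noteq> zr A"
  then have le: "T d \<subseteq>\<^sub>m T e" and "dom (T d) \<noteq> {}" by (auto simp: leq_iff zr_iff)
  moreover have "dom (T d) \<subseteq> dom (T x)" using le dom_eq map_le_implies_dom_le by blast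
  ultimately have "dom (T x) \<subseteq> dom (T d)" using atom_dom_subset[OF x] by blast
  then show "d = e" using le dom_eq by (metis T_eqD map_le_antisym map_le_def subsetD)
qed

lemma zr_cmp: "cmp A (zr A) b = zr A"
  by (simp add: zr_iff T_cmp T_zr pf_comp_def fun_eq_iff)

definition atomic_precomp :: "('b \<rightharpoonup> 'b) \<Rightarrow> ('a \<Rightarrow> 'a) \<Rightarrow> bool" where
  "atomic_precomp g f \<longleftrightarrow>
     (\<exists>x. is_atom A x \<and> dom g = dom (T x)) \<and> (\<forall>a. T (f a) = pf_comp g (T a))"

lemma atomic_precomp_cmp: "is_atom A x \<Longrightarrow> atomic_precomp (T x) (cmp A x)"
  by (auto simp: atomic_precomp_def T_cmp)

lemma atomic_precomp_restr: "is_atom A x \<Longrightarrow> atomic_precomp (pf_D (T x)) (restr A x)"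
  by (auto simp: atomic_precomp_def fun_eq_iff T_restr pf_comp_def pf_D_def dom_def)

context
  fixes g f assumes f: "atomic_precomp g f"
begin

lemma precomp_T: "T (f a) y = (case g y of None \<Rightarrow> None | Some z \<Rightarrow> T a z)"
  using f by (simp add: atomic_precomp_def pf_comp_def)

lemma precomp_eq_iff: "f a = f b \<longleftrightarrow> (\<forall>z\<in>ran g. T a z = T b z)"
proof -
  have "f a = f b \<longleftrightarrow> (\<forall>y. T (f a) y = T (f b) y)" using T_eqD by auto
  then show ?thesis by (auto simp: precomp_T ran_def split: option.splits)
qed

lemma precomp_zero_iff: "f a = zr A \<longleftrightarrow> (\<forall>z\<in>ran g. T a z = None)"
  by (auto simp: zr_iff fun_eq_iff precomp_T ran_def split: option.splits)

lemma precomp_atom_dom: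
  obtains x where "is_atom A x" "dom g = dom (T x)"
  using f by (auto simp: atomic_precomp_def)

lemma precomp_nonzero_iff: "f a \<noteq> zr A \<longleftrightarrow> (\<forall>z\<in>ran g. T a z \<noteq> None)"
proof -
  obtain x where x: "is_atom A x" and dom_g: "dom g = dom (T x)" by (rule precomp_atom_dom)
  show ?thesis
  proof
    assume "f a \<noteq> zr A"
    then have "dom (T (f a)) \<noteq> {}" by (simp add: zr_iff)
    moreover have "dom (T (f a)) \<subseteq> dom g" by (auto simp: precomp_T split: option.splits)
    ultimately have "dom g \<subseteq> dom (T (f a))" using atom_dom_subset[OF x, of "f a"] dom_g by blast
    then show "\<forall>z\<in>ran g. T a z \<noteq> None" by (fastforce simp: ran_def precomp_T)
  next
    assume all: "\<forall>z\<in>ran g. T a z \<noteq> None"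
    obtain y z where "g y = Some z" using atom_nonempty[OF x] dom_g by (metis domD ex_in_conv)
    then have "T (f a) y \<noteq> None" using all by (auto simp: precomp_T ran_def)
    then show "f a \<noteq> zr A" by (auto simp: T_zr)
  qed
qed

lemma precomp_nonzeroD: "f a \<noteq> zr A \<Longrightarrow> z \<in> ran g \<Longrightarrow> T a z \<noteq> None"
  using precomp_nonzero_iff by blast

lemma precomp_atom: "f a \<noteq> zr A \<Longrightarrow> is_atom A (f a)"
proof -
  assume "f a \<noteq> zr A"
  then have "dom (T (f a)) = dom g"
    by (auto simp: precomp_nonzero_iff ran_def precomp_T split: option.splits)
  moreover obtain x where "is_atom A x" "dom g = dom (T x)" by (rule precomp_atom_dom)
  ultimately show ?thesis by (metis atom_if_dom_eq)
qed

lemma precomp_mono: "leq A s j \<Longrightarrow> f s \<noteq> zr A \<Longrightarrow> f s = f j"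
  by (auto simp: leq_iff map_le_def precomp_nonzero_iff precomp_eq_iff domIff)

lemma precomp_cmp_assoc: "f (cmp A a b) = cmp A (f a) b"
  by (intro T_eqD ext) (simp add: precomp_T T_cmp pf_comp_def split: option.split)

lemma precomp_ovr: "f (ovr A a b) = (if f a = zr A then f b else zr A)"
proof (cases "f a = zr A")
  case True
  then show ?thesis by (simp add: precomp_zero_iff precomp_eq_iff T_ovr pf_ovr_def)
next
  case False
  then have "f (ovr A a b) = zr A"
    by (simp add: precomp_zero_iff precomp_nonzeroD T_ovr pf_ovr_def)
  with False show ?thesis by simp
qed

lemma precomp_mt:
  assumes mt: "T (mt A a b) = pf_meet (T a) (T b)"
  shows "f (mt A a b) = (if f a = f b then f a else zr A)"
proof (cases "f a = f b")
  case True
  then have "f (mt A a b) = f a" by (simp add: precomp_eq_iff mt pf_meet_def)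
  with True show ?thesis by simp
next
  case False
  then obtain z where z: "z \<in> ran g" "T a z \<noteq> T b z" by (auto simp: precomp_eq_iff)
  then have "T (mt A a b) z = None" by (simp add: mt pf_meet_def)
  then have "f (mt A a b) = zr A" using precomp_nonzeroD z(1) by blast
  with False show ?thesis by simp
qed

lemma precomp_upd:
  assumes upd: "T (upd A a b) = pf_upd (T a) (T b)"
  shows "f (upd A a b) = (if f a = zr A then zr A else if f b = zr A then f a else f b)"
proof -
  consider "f a = zr A" | "f a \<noteq> zr A" "f b = zr A" | "f a \<noteq> zr A" "f b \<noteq> zr A" by blast
  then show ?thesis
  proof cases
    case 1
    then show ?thesis by (simp add: precomp_zero_iff upd pf_upd_def)
  next
    case 2
    then have "\<forall>z\<in>ran g. T a z \<noteq> None" "\<forall>z\<in>ran g. T b z = None"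
      using precomp_nonzero_iff precomp_zero_iff by blast+
    then have "f (upd A a b) = f a" by (auto simp: precomp_eq_iff upd pf_upd_def)
    with 2 show ?thesis by simp
  next
    case 3
    then have "\<forall>z\<in>ran g. T a z \<noteq> None" "\<forall>z\<in>ran g. T b z \<noteq> None"
      using precomp_nonzero_iff by blast+
    then have "f (upd A a b) = f b" by (auto simp: precomp_eq_iff upd pf_upd_def split: option.split)
    with 3 show ?thesis by simp
  qed
qed

lemma precomp_pjn:
  assumes pjn: "T (pjn A a b) = pf_join (T a) (T b)"
  shows "f (pjn A a b) = (if f a = zr A then f b else f a)"
proof (cases "f a = zr A")
  case True
  then show ?thesis by (simp add: precomp_zero_iff precomp_eq_iff pjn pf_join_def)
next
  case False
  then have "\<forall>z\<in>ran g. T a z \<noteq> None" using precomp_nonzero_iff by blast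
  then have "f (pjn A a b) = f a" by (auto simp: precomp_eq_iff pjn pf_join_def)
  with False show ?thesis by simp
qed

end

lemma cmp_dm:
  assumes x: "is_atom A x" and dm: "T (dm A a) = pf_D (T a)"
  shows "cmp A x (dm A a) = (if cmp A x a = zr A then zr A else x)"
proof (cases "cmp A x a = zr A")
  case True
  then show ?thesis using atomic_precomp_cmp[OF x] by (simp add: precomp_zero_iff dm pf_D_def)
next
  case False
  then have "\<forall>z\<in>ran (T x). T a z \<noteq> None" using precomp_nonzero_iff[OF atomic_precomp_cmp[OF x]] by simp
  then have "T (cmp A x (dm A a)) = T x"
    by (auto simp: fun_eq_iff T_cmp pf_comp_def dm pf_D_def ran_def split: option.split)
  with False show ?thesis by (simp add: T_eqD)
qed

lemma cmp_adm:
  assumes x: "is_atom A x" and adm: "T (adm A a) = pf_A X (T a)"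
  shows "cmp A x (adm A a) = (if cmp A x a = zr A then x else zr A)"
proof (cases "cmp A x a = zr A")
  case True
  then have "\<forall>z\<in>ran (T x). T a z = None" using precomp_zero_iff[OF atomic_precomp_cmp[OF x]] by simp
  moreover have "ran (T x) \<subseteq> X" using pfun_on_T by (simp add: pfun_on_def)
  ultimately have "T (cmp A x (adm A a)) = T x"
    by (auto simp: fun_eq_iff T_cmp pf_comp_def adm pf_A_def ran_def split: option.split)
  with True show ?thesis by (simp add: T_eqD)
next
  case False
  then have "cmp A x (adm A a) = zr A"
    using precomp_nonzeroD[OF atomic_precomp_cmp[OF x]]
    by (simp add: precomp_zero_iff[OF atomic_precomp_cmp[OF x]] adm pf_A_def)
  with False show ?thesis by simp
qed

lemma domain_element_exists:
  assumes rep: "is_rep \<sigma> A X T" and "Dom \<in> \<sigma> \<or> ADom \<in> \<sigma>"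
  shows "\<exists>d. T d = pf_D (T c)"
proof (cases "Dom \<in> \<sigma>")
  case True
  then show ?thesis using rep by (auto simp: is_rep_def)
next
  case False
  then have "T (adm A (adm A c)) = pf_A X (pf_A X (T c))" using assms by (simp add: is_rep_def)
  also have "\<dots> = pf_D (T c)" using pfun_on_T by (simp add: pf_A_pf_A pfun_on_def)
  finally show ?thesis by blast
qed

lemma cmp_domain_element:
  assumes d: "T d = pf_D (T c)" and c: "is_atom A c"
  shows "is_atom A d" and "cmp A d = restr A c"
proof -
  show "is_atom A d" using c by (rule atom_if_dom_eq) (auto simp: d pf_D_def dom_def)
  show "cmp A d = restr A c"
    by (intro ext T_eqD) (simp add: fun_eq_iff T_cmp T_restr d pf_comp_def pf_D_def)
qed

lemma zr_leq: "leq A (zr A) a"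
  by (simp add: leq_iff T_zr)

lemma lub_zero:
  assumes "is_lub A U j" and "U \<subseteq> {zr A}" shows "j = zr A"
proof -
  have "leq A j (zr A)" using assms unfolding is_lub_def by (metis leq_refl singletonD subsetD)
  then show ?thesis using zr_leq by (rule leq_antisym)
qed

lemma cmp_lub_nonzero:
  "cld_joins A \<Longrightarrow> is_lub A S j \<Longrightarrow> cmp A x j \<noteq> zr A \<Longrightarrow> \<exists>s\<in>S. cmp A x s \<noteq> zr A"
  using lub_zero unfolding cld_joins_def by blast

lemma glb_singleton: "is_glb A {t} m \<Longrightarrow> m = t"
  by (auto simp: is_glb_def leq_refl intro: leq_antisym)

lemma restr_leq: "leq A (restr A r a) a"
  by (simp add: leq_iff map_le_def T_restr dom_def)

lemma restr_mono: "leq A a b \<Longrightarrow> leq A (restr A r a) (restr A r b)"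
  by (auto simp: leq_iff map_le_def T_restr dom_def)

lemma is_glb_restr:
  assumes "S \<noteq> {}" and glb: "is_glb A S m"
  shows "is_glb A (restr A r ` S) (restr A r m)"
  unfolding is_glb_def
proof (intro conjI allI impI ballI)
  fix u assume "u \<in> restr A r ` S"
  then obtain s where "s \<in> S" "u = restr A r s" by blast
  then show "leq A (restr A r m) u" using glb restr_mono by (simp add: is_glb_def)
next
  fix l assume lb: "\<forall>u\<in>restr A r ` S. leq A l u"
  then have "leq A l s" if "s \<in> S" for s using that restr_leq leq_trans by blast
  then have lm: "T l \<subseteq>\<^sub>m T m" using glb by (simp add: is_glb_def leq_iff)
  obtain s where "s \<in> S" using \<open>S \<noteq> {}\<close> by blast
  then have ls: "T l \<subseteq>\<^sub>m T (restr A r s)" using lb by (simp add: leq_iff)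
  show "leq A l (restr A r m)"
    unfolding leq_iff map_le_def
  proof
    fix y assume y: "y \<in> dom (T l)"
    then have "T l y = T (restr A r s) y" using ls by (simp add: map_le_def)
    then have "T r y \<noteq> None" using y by (auto simp: T_restr split: if_splits)
    then show "T l y = T (restr A r m) y" using lm y by (auto simp: map_le_def T_restr)
  qed
qed

lemma restr_lub_nonzero:
  assumes lub: "is_lub A S j" and nz: "restr A r j \<noteq> zr A"
  shows "\<exists>s\<in>S. restr A r s \<noteq> zr A"
proof (rule ccontr)
  assume all_zero: "\<not> ?thesis"
  have disj: "T r y = None" if "s \<in> S" "T s y \<noteq> None" for s y
  proof -
    have "T (restr A r s) y = None" using all_zero that(1) by (simp add: T_zr)
    then show ?thesis using that(2) by (simp add: T_restr split: if_splits)
  qed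
  have "leq A s (ovr A r j)" if s: "s \<in> S" for s
    unfolding leq_iff map_le_def
  proof
    fix y assume "y \<in> dom (T s)"
    moreover have "T s \<subseteq>\<^sub>m T j" using lub s by (simp add: is_lub_def leq_iff)
    ultimately show "T s y = T (ovr A r j) y"
      using disj[OF s] by (auto simp: map_le_def T_ovr pf_ovr_def)
  qed
  then have "T j \<subseteq>\<^sub>m T (ovr A r j)" using lub by (simp add: is_lub_def leq_iff)
  then have "T j y = None" if "T r y \<noteq> None" for y
    using that by (cases "T j y") (auto simp: map_le_def T_ovr pf_ovr_def dom_def)
  then have "restr A r j = zr A" by (simp add: zr_iff fun_eq_iff T_restr)
  with nz show False by simp
qed

end

section \<open>Probes\<close>

definition probe_map :: "'a alg \<Rightarrow> 'p set \<Rightarrow> ('p \<Rightarrow> 'a \<Rightarrow> 'a) \<Rightarrow> ('a \<Rightarrow> 'p) \<Rightarrow> 'a \<Rightarrow> ('p \<rightharpoonup> 'p)" where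
  "probe_map A P k emb a = (\<lambda>p. if p \<in> P \<and> k p a \<noteq> zr A then Some (emb (k p a)) else None)"

text \<open>A nonzero probe value \<open>y\<close> is sent to the point \<open>emb y\<close>, whose probe is \<open>y ; _\<close>;
  this is what makes \<open>probe_map\<close> preserve composition.\<close>

locale atomic_probes = ovr_comp_rep A X T
  for A :: "'a alg" and X :: "'b set" and T :: "'a \<Rightarrow> ('b \<rightharpoonup> 'b)" +
  fixes P :: "'p set" and k :: "'p \<Rightarrow> 'a \<Rightarrow> 'a" and emb :: "'a \<Rightarrow> 'p"
  assumes probe_precomp: "p \<in> P \<Longrightarrow> \<exists>g. atomic_precomp g (k p)"
    and emb_in_probes: "is_atom A y \<Longrightarrow> emb y \<in> P"
    and probe_emb: "is_atom A y \<Longrightarrow> k (emb y) = cmp A y"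
    and inj_emb: "inj emb"
begin

abbreviation \<theta> :: "'a \<Rightarrow> ('p \<rightharpoonup> 'p)" where
  "\<theta> \<equiv> probe_map A P k emb"

lemma probe_map_eqI:
  assumes "\<And>p g. p \<in> P \<Longrightarrow> atomic_precomp g (k p) \<Longrightarrow> \<theta> a p = G p"
    and "\<And>p. p \<notin> P \<Longrightarrow> G p = None"
  shows "\<theta> a = G"
proof
  fix p show "\<theta> a p = G p"
  proof (cases "p \<in> P")
    case True
    then obtain g where "atomic_precomp g (k p)" using probe_precomp by blast
    with True show ?thesis by (rule assms(1))
  qed (simp add: probe_map_def assms(2))
qed

lemma probe_map_ovr: "\<theta> (ovr A a b) = pf_ovr (\<theta> a) (\<theta> b)"
  by (rule probe_map_eqI) (auto simp: probe_map_def pf_ovr_def precomp_ovr)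

lemma probe_map_cmp: "\<theta> (cmp A a b) = pf_comp (\<theta> a) (\<theta> b)"
  by (rule probe_map_eqI)
     (auto simp: probe_map_def pf_comp_def precomp_cmp_assoc zr_cmp emb_in_probes probe_emb precomp_atom)

lemma probe_map_mt:
  assumes "\<And>a b. T (mt A a b) = pf_meet (T a) (T b)"
  shows "\<theta> (mt A a b) = pf_meet (\<theta> a) (\<theta> b)"
  by (rule probe_map_eqI) (auto simp: probe_map_def pf_meet_def precomp_mt assms inj_eq inj_emb)

lemma probe_map_upd:
  assumes "\<And>a b. T (upd A a b) = pf_upd (T a) (T b)"
  shows "\<theta> (upd A a b) = pf_upd (\<theta> a) (\<theta> b)"
  by (rule probe_map_eqI) (auto simp: probe_map_def pf_upd_def precomp_upd assms)

lemma probe_map_pjn: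
  assumes "\<And>a b. T (pjn A a b) = pf_join (T a) (T b)"
  shows "\<theta> (pjn A a b) = pf_join (\<theta> a) (\<theta> b)"
  by (rule probe_map_eqI) (auto simp: probe_map_def pf_join_def precomp_pjn assms)

lemma probe_map_pfun_on: "pfun_on P (\<theta> a)"
proof -
  have "emb (k p a) \<in> P" if "p \<in> P" "k p a \<noteq> zr A" for p
    using that probe_precomp precomp_atom emb_in_probes by blast
  then show ?thesis by (auto simp: pfun_on_def probe_map_def ran_def split: if_splits)
qed

lemma inj_probe_map:
  assumes sep: "separating A" and restr_probe: "\<And>c. is_atom A c \<Longrightarrow> \<exists>p\<in>P. k p = restr A c"
  shows "inj \<theta>"
proof (rule injI)
  fix a b assume eq: "\<theta> a = \<theta> b"
  have same_atoms: "leq A c a \<longleftrightarrow> leq A c b" if c: "is_atom A c" for c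
  proof -
    obtain p where p: "p \<in> P" "k p = restr A c" using restr_probe c by blast
    have "c \<noteq> zr A" using c by (simp add: is_atom_def)
    then have "leq A c u \<longleftrightarrow> \<theta> u p = Some (emb c)" for u
      using p by (auto simp: leq_def probe_map_def inj_eq[OF inj_emb])
    then show ?thesis using eq by simp
  qed
  have "leq A a b" and "leq A b a"
    using sep same_atoms unfolding separating_def by blast+
  then show "a = b" by (rule leq_antisym)
qed

lemma is_rep_probe_map:
  assumes rep: "is_rep \<sigma> A X T" and "inj \<theta>"
    and "\<And>a. Dom \<in> \<sigma> \<Longrightarrow> \<theta> (dm A a) = pf_D (\<theta> a)"
    and "\<And>a. ADom \<in> \<sigma> \<Longrightarrow> \<theta> (adm A a) = pf_A P (\<theta> a)"
  shows "is_rep \<sigma> A P \<theta>"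
  using assms unfolding is_rep_def
  by (simp add: probe_map_pfun_on probe_map_ovr probe_map_cmp probe_map_mt probe_map_upd probe_map_pjn)

lemma probe_map_join_complete:
  assumes probe_lub: "\<And>p S j. p \<in> P \<Longrightarrow> is_lub A S j \<Longrightarrow> k p j \<noteq> zr A \<Longrightarrow> \<exists>s\<in>S. k p s \<noteq> zr A"
  shows "join_complete A \<theta>"
  unfolding join_complete_def
proof (intro allI impI)
  fix S j assume lub: "is_lub A S j"
  have "\<theta> j p = Some q \<longleftrightarrow> (\<exists>s\<in>S. \<theta> s p = Some q)" for p q
  proof (cases "p \<in> P")
    case True
    then obtain g where g: "atomic_precomp g (k p)" using probe_precomp by blast
    have "k p s = k p j" if "s \<in> S" "k p s \<noteq> zr A" for s
      using precomp_mono[OF g] lub that by (auto simp: is_lub_def)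
    then show ?thesis using probe_lub[OF True lub] True by (auto simp: probe_map_def) metis
  qed (simp add: probe_map_def)
  then show "pgraph (\<theta> j) = (\<Union>s\<in>S. pgraph (\<theta> s))" by (auto simp: pgraph_def)
qed

lemma probe_map_meet_complete:
  assumes probe_glb: "\<And>p S m. p \<in> P \<Longrightarrow> S \<noteq> {} \<Longrightarrow> is_glb A S m \<Longrightarrow> is_glb A (k p ` S) (k p m)"
  shows "meet_complete A \<theta>"
  unfolding meet_complete_def
proof (intro allI impI)
  fix S m assume "S \<noteq> {} \<and> is_glb A S m"
  then have ne: "S \<noteq> {}" and glb: "is_glb A S m" by auto
  then obtain s0 where s0: "s0 \<in> S" by blast
  have "\<theta> m p = Some q \<longleftrightarrow> (\<forall>s\<in>S. \<theta> s p = Some q)" for p q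
  proof (cases "p \<in> P")
    case True
    then obtain g where g: "atomic_precomp g (k p)" using probe_precomp by blast
    show ?thesis
    proof
      assume "\<theta> m p = Some q"
      moreover have "k p m = k p s" if "s \<in> S" "k p m \<noteq> zr A" for s
        using precomp_mono[OF g] glb that by (auto simp: is_glb_def)
      ultimately show "\<forall>s\<in>S. \<theta> s p = Some q" by (auto simp: probe_map_def split: if_splits)
    next
      assume all: "\<forall>s\<in>S. \<theta> s p = Some q"
      have "k p s = k p s0" if "s \<in> S" for s
      proof -
        have "\<theta> s p = Some q" "\<theta> s0 p = Some q" using all that s0 by auto
        then show ?thesis by (auto simp: probe_map_def inj_eq[OF inj_emb] split: if_splits)
      qed
      then have "k p ` S = {k p s0}" using s0 by blast
      then have "k p m = k p s0" using probe_glb[OF True ne glb] by (simp add: glb_singleton)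
      then have "\<theta> m p = \<theta> s0 p" by (simp add: probe_map_def)
      then show "\<theta> m p = Some q" using all s0 by simp
    qed
  qed (use s0 in \<open>auto simp: probe_map_def\<close>)
  then show "pgraph (\<theta> m) = (\<Inter>s\<in>S. pgraph (\<theta> s))" using ne by (auto simp: pgraph_def)
qed

end

section \<open>The two atom representations\<close>

definition theta1_probe :: "'a alg \<Rightarrow> 'a + 'a set \<Rightarrow> 'a \<Rightarrow> 'a" where
  "theta1_probe A = case_sum (cmp A) (\<lambda>c. restr A (SOME x. x \<in> c))"

context ovr_comp_rep
begin

lemma theta1_probe_class:
  assumes "is_atom A c" shows "theta1_probe A (Inr (sim_rel A `` {c})) = restr A c"
proof -
  let ?r = "SOME x. x \<in> sim_rel A `` {c}"
  have "c \<in> sim_rel A `` {c}" using assms by (simp add: sim_rel_def sim_iff atoms_def)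
  then have "(c, ?r) \<in> sim_rel A" by (metis Image_singleton_iff someI)
  then have "restr A c a = restr A ?r a" for a by (rule restr_sim_rel)
  then show ?thesis by (simp add: fun_eq_iff theta1_probe_def)
qed

lemma theta2_eq_probe_map: "theta2 A = probe_map A (atoms A) (cmp A) (\<lambda>y. y)"
  by (simp add: fun_eq_iff theta2_def probe_map_def atoms_def)

lemma theta1_eq_probe_map: "theta1 A = probe_map A (base1 A) (theta1_probe A) Inl"
  by (auto simp: fun_eq_iff theta1_def probe_map_def theta1_probe_def base1_def split: sum.split)

end

sublocale ovr_comp_rep \<subseteq> atom_probes: atomic_probes A X T "atoms A" "cmp A" "\<lambda>y. y"
proof unfold_locales
  show "\<exists>g. atomic_precomp g (cmp A p)" if "p \<in> atoms A" for p
    using that atomic_precomp_cmp by (auto simp: atoms_def)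
qed (simp_all add: atoms_def)

sublocale ovr_comp_rep \<subseteq> class_probes: atomic_probes A X T "base1 A" "theta1_probe A" Inl
proof unfold_locales
  fix p assume "p \<in> base1 A"
  then consider x where "p = Inl x" "is_atom A x" | c where "p = Inr c" "c \<in> atoms A // sim_rel A"
    by (auto simp: base1_def atoms_def)
  then show "\<exists>g. atomic_precomp g (theta1_probe A p)"
  proof cases
    case 1
    then show ?thesis using atomic_precomp_cmp by (auto simp: theta1_probe_def)
  next
    case 2
    then show ?thesis using atomic_precomp_restr class_rep_atom by (auto simp: theta1_probe_def)
  qed
qed (simp_all add: base1_def theta1_probe_def atoms_def)

context ovr_comp_rep
begin

lemma theta2_dm:
  assumes dm: "T (dm A a) = pf_D (T a)"
  shows "theta2 A (dm A a) = pf_D (theta2 A a)"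
proof
  fix x show "theta2 A (dm A a) x = pf_D (theta2 A a) x"
  proof (cases "x \<in> atoms A")
    case True
    then have "is_atom A x" "x \<noteq> zr A" by (auto simp: atoms_def is_atom_def)
    then show ?thesis using cmp_dm[OF _ dm] by (simp add: theta2_def pf_D_def)
  qed (simp add: theta2_def pf_D_def)
qed

lemma theta2_adm:
  assumes adm: "T (adm A a) = pf_A X (T a)"
  shows "theta2 A (adm A a) = pf_A (atoms A) (theta2 A a)"
proof
  fix x show "theta2 A (adm A a) x = pf_A (atoms A) (theta2 A a) x"
  proof (cases "x \<in> atoms A")
    case True
    then have "is_atom A x" "x \<noteq> zr A" by (auto simp: atoms_def is_atom_def)
    then show ?thesis using True cmp_adm[OF _ adm] by (simp add: theta2_def pf_A_def)
  qed (simp add: theta2_def pf_A_def)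
qed

lemma is_rep_theta1:
  assumes rep: "is_rep \<sigma> A X T" and sep: "separating A" and "Dom \<notin> \<sigma>" "ADom \<notin> \<sigma>"
  shows "is_rep \<sigma> A (base1 A) (theta1 A)"
  unfolding theta1_eq_probe_map
proof (rule class_probes.is_rep_probe_map[OF rep])
  show "inj class_probes.\<theta>"
  proof (rule class_probes.inj_probe_map[OF sep])
    fix c assume c: "is_atom A c"
    then have "Inr (sim_rel A `` {c}) \<in> base1 A" by (simp add: base1_def quotientI atoms_def)
    then show "\<exists>p\<in>base1 A. theta1_probe A p = restr A c"
      using theta1_probe_class[OF c] by blast
  qed
qed (use assms(3,4) in simp_all)

lemma is_rep_theta2:
  assumes rep: "is_rep \<sigma> A X T" and sep: "separating A" and D: "Dom \<in> \<sigma> \<or> ADom \<in> \<sigma>"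
  shows "is_rep \<sigma> A (atoms A) (theta2 A)"
  unfolding theta2_eq_probe_map
proof (rule atom_probes.is_rep_probe_map[OF rep])
  show "inj atom_probes.\<theta>"
  proof (rule atom_probes.inj_probe_map[OF sep])
    fix c assume c: "is_atom A c"
    obtain d where d: "T d = pf_D (T c)" using domain_element_exists[OF rep D] by blast
    then have "d \<in> atoms A" using cmp_domain_element(1)[OF d c] by (simp add: atoms_def)
    then show "\<exists>p\<in>atoms A. cmp A p = restr A c" using cmp_domain_element(2)[OF d c] by blast
  qed
qed (use rep in \<open>auto simp: is_rep_def theta2_dm[unfolded theta2_eq_probe_map]
       theta2_adm[unfolded theta2_eq_probe_map]\<close>)

lemma theta1_join_complete: "cld_joins A \<Longrightarrow> join_complete A (theta1 A)"
  unfolding theta1_eq_probe_map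
  by (rule class_probes.probe_map_join_complete)
     (auto simp: base1_def theta1_probe_def intro: cmp_lub_nonzero restr_lub_nonzero)

lemma theta1_meet_complete:
  assumes "cld_meets A" shows "meet_complete A (theta1 A)"
  unfolding theta1_eq_probe_map
proof (rule class_probes.probe_map_meet_complete)
  fix p S m assume "p \<in> base1 A" "S \<noteq> {}" "is_glb A S m"
  then show "is_glb A (theta1_probe A p ` S) (theta1_probe A p m)"
    using assms is_glb_restr by (cases p) (simp_all add: theta1_probe_def cld_meets_def)
qed

lemma theta2_join_complete: "cld_joins A \<Longrightarrow> join_complete A (theta2 A)"
  unfolding theta2_eq_probe_map
  by (rule atom_probes.probe_map_join_complete) (rule cmp_lub_nonzero)

lemma theta2_meet_complete: "cld_meets A \<Longrightarrow> meet_complete A (theta2 A)"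
  unfolding theta2_eq_probe_map
  by (rule atom_probes.probe_map_meet_complete) (unfold cld_meets_def, blast)

end

lemma ovr_comp_repI: "{Ovr, Comp} \<subseteq> \<sigma> \<Longrightarrow> is_rep \<sigma> A X T \<Longrightarrow> ovr_comp_rep A X T"
  by unfold_locales (auto simp: is_rep_def)

theorem proposition6p1:
  fixes \<sigma> :: "opsym set" and A :: "'a alg"
    and X0 :: "'b set" and \<theta>0 :: "'a \<Rightarrow> ('b \<rightharpoonup> 'b)"
  assumes sig: "{Ovr, Comp} \<subseteq> \<sigma>"
    and repr: "is_rep \<sigma> A X0 \<theta>0"
    and sep: "separating A"
  shows "equiv (atoms A) (sim_rel A)
    \<and> (\<forall>a x. x \<in> atoms A \<and> cmp A x a \<noteq> zr A \<longrightarrow> cmp A x a \<in> atoms A)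
    \<and> (Dom \<notin> \<sigma> \<and> ADom \<notin> \<sigma> \<longrightarrow>
          (\<forall>a x. x \<in> atoms A \<and> restr A x a \<noteq> zr A \<longrightarrow> restr A x a \<in> atoms A)
        \<and> (\<forall>a x y. (x, y) \<in> sim_rel A \<longrightarrow> restr A x a = restr A y a)
        \<and> is_rep \<sigma> A (base1 A) (theta1 A)
        \<and> (cld_joins A \<longrightarrow> join_complete A (theta1 A))
        \<and> (cld_meets A \<longrightarrow> meet_complete A (theta1 A)))
    \<and> (Dom \<in> \<sigma> \<or> ADom \<in> \<sigma> \<longrightarrow>
          is_rep \<sigma> A (atoms A) (theta2 A)
        \<and> (cld_joins A \<longrightarrow> join_complete A (theta2 A))
        \<and> (cld_meets A \<longrightarrow> meet_complete A (theta2 A)))"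
proof -
  interpret ovr_comp_rep A X0 \<theta>0 using sig repr by (rule ovr_comp_repI)
  show ?thesis
    using equiv_sim_rel restr_sim_rel is_rep_theta1[OF repr sep] is_rep_theta2[OF repr sep]
      theta1_join_complete theta1_meet_complete theta2_join_complete theta2_meet_complete
      precomp_atom[OF atomic_precomp_cmp] precomp_atom[OF atomic_precomp_restr]
    by (auto simp: atoms_def)
qed

end
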